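(* For every nested marble transducer $T$ (of any level $k\ge0$), the domain $\mathrm{dom}(f_T)$ of the transduction it recognizes is a regular language.
   Context: Nested marble transducers (NMT). For an input $u\in\Sigma^*$ of length $n$, machines read $\vdash u\dashv$, with positions $0,\dots,n+1$: position $0$ carries $\vdash$ and position $n+1$ carries $\dashv$. Level 0. A $(0,\Sigma,\Gamma)$-NMT (simple transducer) is $T=(A,\mu)$, where $A=(Q,q_0,F,\delta)$ is a DFA over $\Sigma\cup\{\vdash,\dashv\}$ and $\mu:F\to\Gamma^{\le1}$. Its operational semantics is $f^{op}_T(q,u)=(\mu(q_f),q_f)$ if $A$ goes from $q$ to some $q_f\in F$ reading $\vdash u\dashv$, undefined otherwise. Level $k\ge1$. A $(k,\Sigma,\Gamma)$-NMT is a tuple $T=(C,c_0,Q,q_0,F,\delta,\delta_{call},\delta_{ret},\mu,T')$ where: - $C$ is a finite set of marble colours and $c_0\in C$; - $Q$ is a finite set of states, $q_0$ is initial and $F\subseteq Q$ is accepting; - the assistant $T'$ is a $(k-1,\Sigma\times C,\Gamma)$-NMT with state set $Q'$ and accepting set $F'$; - $\delta:Q\times(\Sigma\cup\{\dashv\})\times C\rightharpoonup(C\cup\{\bot\})\times Q$; - $\delta_{call}:Q\times C\to Q'$ and $\delta_{ret}:Q\times C\times F'\to Q$; - $\mu:\mathrm{dom}(\delta)\to\Gamma^*$. A configuration on $u$ is $(q,i,v)$ with $q\in Q$, $0\le i\le n+1$ and $v\in C^{n+2-i}$, the marbles on positions $i,\dots,n+1$. Writing $v=cv'$ and $\sigma$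 for the letter at position $i$, the steps are: 1. If $1\le i\le n+1$ and $\delta(q,\sigma,c)=(c',q')$, then $(q,i,cv')\to(q',i-1,c'cv')$ with output $\mu(q,\sigma,c)$ (drop a marble, move left). 2. If $1\le i\le n$ and $\delta(q,\sigma,c)=(\bot,q')$, then $(q,i,cv')\to(q',i+1,v')$ with output $\mu(q,\sigma,c)$ (lift the marble, move right). 3. If $i=0$ and $f^{op}_{T'}(\delta_{call}(q,c),\tilde u)=(x,p)$, then $(q,0,cv')\to(\delta_{ret}(q,c,p),1,v')$ with output $x$. Here $\tilde u$ is $\vdash u\dashv$ annotated position-wise with the current marbles $cv'$. $f^{op}_T(q,u)=(x_1\cdots x_m,q_f)$ if the steps from $(q,n+1,c_0)$, with outputs $x_1,\dots,x_m$, reach a configuration with state $q_f\in F$, all earlier configurations having non-accepting states; otherwise it is undefined. At every level $k\ge0$, $f_T(u)$ is the first component of $f^{op}_T(q_0,u)$, and $k$ is the level of $T$. We write $k$-NMT for an NMT of level $k$. *)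

theory Defs
  imports Main
begin

text \<open>Letters seen by a machine: a base input letter together with the list of
marble colours that annotate it (innermost-added colour first).  A top-level
machine over the alphabet 'a reads letters (a, []); its assistant reads
(a, [c]); the assistant's assistant reads (a, [c', c]), etc.  This uniform
letter type encodes the nested alphabets Sigma, Sigma x C, (Sigma x C) x C', ...\<close>
type_synonym 'a letter = "'a \<times> nat list"

datatype 'b esym = LEnd | REnd | Let 'b

text \<open>Simple: states, initial state, accepting states, DFA transition, output
(Gamma^{<=1}, as an option).
Nest: colours C, initial colour c0, states Q, initial q0, accepting F,
delta (letter None = right end marker; result None = undefined;
result Some (None, q') = lift marble (bottom); Some (Some c', q') = drop c'),
delta_call, delta_ret, mu, assistant.\<close>
datatype ('a, 'g) nmt =
    Simple "nat set" nat "nat set" "nat \<Rightarrow> 'a letter esym \<Rightarrow> nat" "nat \<Rightarrow> 'g option"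
  | Nest "nat set" nat "nat set" nat "nat set"
         "nat \<Rightarrow> 'a letter option \<Rightarrow> nat \<Rightarrow> (nat option \<times> nat) option"
         "nat \<Rightarrow> nat \<Rightarrow> nat"
         "nat \<Rightarrow> nat \<Rightarrow> nat \<Rightarrow> nat"
         "nat \<Rightarrow> 'a letter option \<Rightarrow> nat \<Rightarrow> 'g list"
         "('a, 'g) nmt"

primrec nmt_states :: "('a, 'g) nmt \<Rightarrow> nat set" where
  "nmt_states (Simple Q q0 F \<delta> \<mu>) = Q"
| "nmt_states (Nest C c0 Q q0 F \<delta> dc dr \<mu> T') = Q"

primrec nmt_init :: "('a, 'g) nmt \<Rightarrow> nat" where
  "nmt_init (Simple Q q0 F \<delta> \<mu>) = q0"
| "nmt_init (Nest C c0 Q q0 F \<delta> dc dr \<mu> T') = q0"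

primrec nmt_final :: "('a, 'g) nmt \<Rightarrow> nat set" where
  "nmt_final (Simple Q q0 F \<delta> \<mu>) = F"
| "nmt_final (Nest C c0 Q q0 F \<delta> dc dr \<mu> T') = F"

primrec nmt_wf :: "('a, 'g) nmt \<Rightarrow> bool" where
  "nmt_wf (Simple Q q0 F \<delta> \<mu>) \<longleftrightarrow>
     finite Q \<and> q0 \<in> Q \<and> F \<subseteq> Q \<and> (\<forall>q\<in>Q. \<forall>a. \<delta> q a \<in> Q)"
| "nmt_wf (Nest C c0 Q q0 F \<delta> dc dr \<mu> T') \<longleftrightarrow>
     finite C \<and> c0 \<in> C \<and> finite Q \<and> q0 \<in> Q \<and> F \<subseteq> Q \<and>
     (\<forall>q\<in>Q. \<forall>a. \<forall>c\<in>C. \<forall>c' q'. \<delta> q a c = Some (Some c', q') \<longrightarrow> c' \<in> C \<and> q' \<in> Q) \<and>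
     (\<forall>q\<in>Q. \<forall>a. \<forall>c\<in>C. \<forall>q'. \<delta> q a c = Some (None, q') \<longrightarrow> q' \<in> Q) \<and>
     (\<forall>q\<in>Q. \<forall>c\<in>C. dc q c \<in> nmt_states T') \<and>
     (\<forall>q\<in>Q. \<forall>c\<in>C. \<forall>p\<in>nmt_final T'. dr q c p \<in> Q) \<and>
     nmt_wf T'"

text \<open>Configurations (q, i, v): state, head position in 0..n+1, marbles on
positions i..n+1 (head of the list = marble at position i).\<close>
type_synonym config = "nat \<times> nat \<times> nat list"

text \<open>Letter at position i (1 \<le> i \<le> n) of the input, or the right end marker
(None) at position n+1.\<close>
definition pos_letter :: "'b list \<Rightarrow> nat \<Rightarrow> 'b option" where
  "pos_letter w i = (if 1 \<le> i \<and> i \<le> length w then Some (w ! (i - 1)) else None)"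

text \<open>Annotation of the input letters at positions 1..n with the marbles on
those positions (the marbles on the end markers are the one at position 0, which
is passed via delta_call, and the one at position n+1, which is always c0).\<close>
definition annotate :: "'a letter list \<Rightarrow> nat list \<Rightarrow> 'a letter list" where
  "annotate w v = map (\<lambda>((a, cs), c). (a, c # cs)) (zip w v)"

definition nmt_step ::
  "(nat \<Rightarrow> 'a letter list \<Rightarrow> 'g list \<times> nat \<Rightarrow> bool)
   \<Rightarrow> (nat \<Rightarrow> 'a letter option \<Rightarrow> nat \<Rightarrow> (nat option \<times> nat) option)
   \<Rightarrow> (nat \<Rightarrow> nat \<Rightarrow> nat) \<Rightarrow> (nat \<Rightarrow> nat \<Rightarrow> nat \<Rightarrow> nat)
   \<Rightarrow> (nat \<Rightarrow> 'a letter option \<Rightarrow> nat \<Rightarrow> 'g list)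
   \<Rightarrow> 'a letter list \<Rightarrow> config \<Rightarrow> 'g list \<Rightarrow> config \<Rightarrow> bool" where
  "nmt_step opT' \<delta> dc dr \<mu> w cf x cf' \<longleftrightarrow>
     (case cf of (q, i, v) \<Rightarrow>
       (\<exists>c v'. v = c # v' \<and>
         ((1 \<le> i \<and> i \<le> length w + 1 \<and>
             (\<exists>c' q'. \<delta> q (pos_letter w i) c = Some (Some c', q') \<and>
                     cf' = (q', i - 1, c' # c # v') \<and> x = \<mu> q (pos_letter w i) c))
        \<or> (1 \<le> i \<and> i \<le> length w \<and>
             (\<exists>q'. \<delta> q (pos_letter w i) c = Some (None, q') \<and>
                   cf' = (q', i + 1, v') \<and> x = \<mu> q (pos_letter w i) c))
        \<or> (i = 0 \<and>
             (\<exists>p. opT' (dc q c) (annotate w v') (x, p) \<and>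
                  cf' = (dr q c p, 1, v'))))))"

primrec nmt_op :: "('a, 'g) nmt \<Rightarrow> nat \<Rightarrow> 'a letter list \<Rightarrow> 'g list \<times> nat \<Rightarrow> bool" where
  "nmt_op (Simple Q q0 F \<delta> \<mu>) q w r \<longleftrightarrow>
     (let qf = fold (\<lambda>a s. \<delta> s a) (LEnd # map Let w @ [REnd]) q in
        qf \<in> F \<and> r = ((case \<mu> qf of None \<Rightarrow> [] | Some g \<Rightarrow> [g]), qf))"
| "nmt_op (Nest C c0 Q q0 F \<delta> dc dr \<mu> T') q w r \<longleftrightarrow>
     (\<exists>cfs :: config list. \<exists>outs :: 'g list list.
        length cfs = length outs + 1 \<and>
        cfs ! 0 = (q, length w + 1, [c0]) \<and>
        (\<forall>j < length outs. nmt_step (nmt_op T') \<delta> dc dr \<mu> w (cfs ! j) (outs ! j) (cfs ! Suc j)) \<and>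
        (\<forall>j < length outs. fst (cfs ! j) \<notin> F) \<and>
        fst (last cfs) \<in> F \<and>
        r = (concat outs, fst (last cfs)))"

definition nmt_dom :: "('a, 'g) nmt \<Rightarrow> 'a list set" where
  "nmt_dom T = {u. \<exists>r. nmt_op T (nmt_init T) (map (\<lambda>a. (a, [])) u) r}"

definition regular_lang :: "'a list set \<Rightarrow> bool" where
  "regular_lang L \<longleftrightarrow>
     (\<exists>(Q :: nat set) q0 F (\<delta> :: nat \<Rightarrow> 'a \<Rightarrow> nat).
        finite Q \<and> q0 \<in> Q \<and> F \<subseteq> Q \<and> (\<forall>q\<in>Q. \<forall>a. \<delta> q a \<in> Q) \<and>
        L = {w. fold (\<lambda>a q. \<delta> q a) w q0 \<in> F})"

end

theory Submission
  imports Defs "HOL-Library.FuncSet"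
begin

text \<open>
  Call a relation P q w p between states and words recognizable if some congruence of finite
  index on words saturates it.  By induction on the level, the relation "started in q on input w,
  the machine stops accepting in p" is recognizable; the domain of the top-level machine is then
  accepted by the automaton on congruence classes.

  Level 0 is a DFA, whose state transformations give the congruence.  At level k + 1 let
  \<Phi>' be the congruence of the assistant on annotated words.  A run that moves only on
  positions 0..m sees the input to the right of m only through assistant calls, hence only
  through the \<Phi>'-class of that annotated suffix.  Its possible outcomes (accepting, or leaving to
  position m + 1 in some state) therefore form a finite table indexed by state, marble at m and
  that class.  The table at m + 1 arises from the table at m and the letter at m + 1 by
  iterating excursions to the left, so a word acts on the finite set of tables, and words that
  act alike cannot be told apart.
\<close>

section \<open>Recognizable relations\<close>

definition congruence_recognizes ::
  "'b set \<Rightarrow> ('b list \<Rightarrow> nat) \<Rightarrow> nat set \<Rightarrow> (nat \<Rightarrow> 'b list \<Rightarrow> nat \<Rightarrow> bool) \<Rightarrow> bool" where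
  "congruence_recognizes A \<Phi> S P \<longleftrightarrow>
     finite (\<Phi> ` lists A) \<and>
     (\<forall>u\<in>lists A. \<forall>u'\<in>lists A. \<forall>v\<in>lists A. \<forall>v'\<in>lists A.
        \<Phi> u = \<Phi> u' \<longrightarrow> \<Phi> v = \<Phi> v' \<longrightarrow> \<Phi> (u @ v) = \<Phi> (u' @ v')) \<and>
     (\<forall>w\<in>lists A. \<forall>w'\<in>lists A. \<Phi> w = \<Phi> w' \<longrightarrow> (\<forall>q\<in>S. \<forall>p. P q w p = P q w' p))"

text \<open>The congruence takes values in nat so that recognizability has a fixed type, as the
  induction on the level requires; recognizableI accepts any codomain.\<close>

definition recognizable :: "'b set \<Rightarrow> nat set \<Rightarrow> (nat \<Rightarrow> 'b list \<Rightarrow> nat \<Rightarrow> bool) \<Rightarrow> bool" where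
  "recognizable A S P \<longleftrightarrow> (\<exists>\<Phi>. congruence_recognizes A \<Phi> S P)"

lemma
  assumes "congruence_recognizes A \<Phi> S P"
  shows congruence_recognizes_finite: "finite (\<Phi> ` lists A)"
    and congruence_recognizes_append:
      "\<lbrakk>u \<in> lists A; u' \<in> lists A; v \<in> lists A; v' \<in> lists A; \<Phi> u = \<Phi> u'; \<Phi> v = \<Phi> v'\<rbrakk>
       \<Longrightarrow> \<Phi> (u @ v) = \<Phi> (u' @ v')"
    and congruence_recognizes_saturates:
      "\<lbrakk>w \<in> lists A; w' \<in> lists A; \<Phi> w = \<Phi> w'; q \<in> S\<rbrakk> \<Longrightarrow> P q w p = P q w' p"
  using assms unfolding congruence_recognizes_def by blast+

lemma recognizableI:
  fixes \<Psi> :: "'b list \<Rightarrow> 'z"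
  assumes finite: "finite (\<Psi> ` lists A)"
    and append: "\<And>u u' v v'. \<lbrakk>u \<in> lists A; u' \<in> lists A; v \<in> lists A; v' \<in> lists A;
        \<Psi> u = \<Psi> u'; \<Psi> v = \<Psi> v'\<rbrakk> \<Longrightarrow> \<Psi> (u @ v) = \<Psi> (u' @ v')"
    and saturates: "\<And>w w' q p. \<lbrakk>w \<in> lists A; w' \<in> lists A; \<Psi> w = \<Psi> w'; q \<in> S\<rbrakk>
        \<Longrightarrow> P q w p = P q w' p"
  shows "recognizable A S P"
proof -
  obtain f :: "'z \<Rightarrow> nat" where f: "inj_on f (\<Psi> ` lists A)"
    using finite_imp_inj_to_nat_seg[OF finite] by blast
  have eq: "f (\<Psi> u) = f (\<Psi> u') \<longleftrightarrow> \<Psi> u = \<Psi> u'" if "u \<in> lists A" "u' \<in> lists A" for u u'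
    using inj_on_eq_iff[OF f] that by blast
  have "congruence_recognizes A (f \<circ> \<Psi>) S P"
    unfolding congruence_recognizes_def
  proof (intro conjI ballI impI allI)
    show "finite ((f \<circ> \<Psi>) ` lists A)"
      unfolding image_comp[symmetric] using finite by (rule finite_imageI)
  next
    fix u u' v v'
    assume "u \<in> lists A" "u' \<in> lists A" "v \<in> lists A" "v' \<in> lists A"
      "(f \<circ> \<Psi>) u = (f \<circ> \<Psi>) u'" "(f \<circ> \<Psi>) v = (f \<circ> \<Psi>) v'"
    then have "\<Psi> u = \<Psi> u'" "\<Psi> v = \<Psi> v'"
      using eq by auto
    with \<open>u \<in> lists A\<close> \<open>u' \<in> lists A\<close> \<open>v \<in> lists A\<close> \<open>v' \<in> lists A\<close>
    have "\<Psi> (u @ v) = \<Psi> (u' @ v')"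
      by (rule append)
    then show "(f \<circ> \<Psi>) (u @ v) = (f \<circ> \<Psi>) (u' @ v')"
      by simp
  next
    fix w w' q p
    assume "w \<in> lists A" "w' \<in> lists A" "(f \<circ> \<Psi>) w = (f \<circ> \<Psi>) w'" "q \<in> S"
    then show "P q w p = P q w' p"
      by (intro saturates) (auto simp: eq)
  qed
  then show ?thesis
    unfolding recognizable_def by blast
qed

lemma recognizable_by_fold:
  fixes f :: "'x \<Rightarrow> 'b \<Rightarrow> 'x"
  assumes "finite X"
    and closed: "\<And>x a. x \<in> X \<Longrightarrow> a \<in> A \<Longrightarrow> f x a \<in> X"
    and saturates: "\<And>w w' q p. \<lbrakk>w \<in> lists A; w' \<in> lists A;
        \<forall>x\<in>X. fold (\<lambda>a x. f x a) w x = fold (\<lambda>a x. f x a) w' x; q \<in> S\<rbrakk> \<Longrightarrow> P q w p = P q w' p"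
  shows "recognizable A S P"
proof -
  let ?run = "\<lambda>w. fold (\<lambda>a x. f x a) w"
  have run_closed: "?run w x \<in> X" if "w \<in> lists A" "x \<in> X" for w x
    using that by (induction w arbitrary: x) (simp_all add: closed)
  have restrict_eq: "restrict (?run w) X = restrict (?run w') X \<longleftrightarrow> (\<forall>x\<in>X. ?run w x = ?run w' x)"
    for w w' by (auto simp: restrict_def fun_eq_iff)
  show ?thesis
  proof (rule recognizableI[of "\<lambda>w. restrict (?run w) X"])
    have "(\<lambda>w. restrict (?run w) X) ` lists A \<subseteq> X \<rightarrow>\<^sub>E X"
      using run_closed by (simp add: image_subset_iff restrict_PiE_iff)
    then show "finite ((\<lambda>w. restrict (?run w) X) ` lists A)"
      using finite_PiE[OF \<open>finite X\<close> \<open>finite X\<close>] finite_subset by blast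
  next
    fix u u' v v'
    assume "u \<in> lists A" "u' \<in> lists A" "restrict (?run u) X = restrict (?run u') X"
      "restrict (?run v) X = restrict (?run v') X"
    then show "restrict (?run (u @ v)) X = restrict (?run (u' @ v')) X"
      unfolding restrict_eq by (simp add: run_closed)
  next
    fix w w' q p
    assume "w \<in> lists A" "w' \<in> lists A" "restrict (?run w) X = restrict (?run w') X" "q \<in> S"
    then show "P q w p = P q w' p"
      by (intro saturates) (simp_all add: restrict_eq)
  qed
qed

lemma regular_lang_if_recognizable:
  fixes emb :: "'a \<Rightarrow> 'b"
  assumes "recognizable (range emb) S P" and "q \<in> S"
  shows "regular_lang {u. \<exists>p. P q (map emb u) p}"
proof -
  let ?A = "range emb"
  obtain \<Phi> where \<Phi>: "congruence_recognizes ?A \<Phi> S P"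
    using assms(1) unfolding recognizable_def ..
  define rep where "rep \<rho> = (SOME w. w \<in> lists ?A \<and> \<Phi> w = \<rho>)" for \<rho>
  have rep: "rep (\<Phi> w) \<in> lists ?A \<and> \<Phi> (rep (\<Phi> w)) = \<Phi> w" if "w \<in> lists ?A" for w
    unfolding rep_def by (rule someI[of _ w]) (use that in auto)
  define \<delta> where "\<delta> \<rho> a = \<Phi> (rep \<rho> @ [emb a])" for \<rho> a
  define F where "F = {\<rho> \<in> \<Phi> ` lists ?A. \<exists>p. P q (rep \<rho>) p}"
  have run: "fold (\<lambda>a \<rho>. \<delta> \<rho> a) u (\<Phi> []) = \<Phi> (map emb u)" for u
  proof (induction u rule: rev_induct)
    case (snoc a u)
    have "map emb u \<in> lists ?A" by auto
    then have "\<Phi> (rep (\<Phi> (map emb u)) @ [emb a]) = \<Phi> (map emb u @ [emb a])"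
      by (intro congruence_recognizes_append[OF \<Phi>]) (simp_all add: rep)
    then show ?case
      using snoc by (simp add: \<delta>_def)
  qed simp
  have accepts_rep: "(\<exists>p. P q (rep (\<Phi> (map emb u))) p) \<longleftrightarrow> (\<exists>p. P q (map emb u) p)" for u
  proof -
    have "map emb u \<in> lists ?A" by auto
    then show ?thesis
      using congruence_recognizes_saturates[OF \<Phi> _ _ _ assms(2)] rep by metis
  qed
  show ?thesis
    unfolding regular_lang_def
  proof (intro exI conjI)
    show "finite (\<Phi> ` lists ?A)"
      by (rule congruence_recognizes_finite[OF \<Phi>])
    show "\<forall>\<rho>\<in>\<Phi> ` lists ?A. \<forall>a. \<delta> \<rho> a \<in> \<Phi> ` lists ?A"
      using rep by (auto simp: \<delta>_def)
    show "{u. \<exists>p. P q (map emb u) p} = {u. fold (\<lambda>a \<rho>. \<delta> \<rho> a) u (\<Phi> []) \<in> F}"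
      unfolding run F_def using accepts_rep by (auto intro!: imageI)
  qed (auto simp: F_def)
qed

section \<open>Runs of nested marble transducers\<close>

lemma rtranclp_if_indexed_path:
  assumes "length cfs = Suc (length outs)" and "cfs ! 0 = a"
    and "\<forall>j < length outs. R (cfs ! j) (outs ! j) (cfs ! Suc j)" and "last cfs = b"
  shows "(\<lambda>x y. \<exists>e. R x e y)\<^sup>*\<^sup>* a b"
  using assms
proof (induction outs arbitrary: cfs a)
  case Nil
  then show ?case by (cases cfs) auto
next
  case (Cons e outs)
  obtain cfs' where cfs: "cfs = a # cfs'"
    using Cons.prems(1,2) by (cases cfs) auto
  have "cfs' \<noteq> []"
    using Cons.prems(1) cfs by auto
  have steps: "R (cfs ! j) ((e # outs) ! j) (cfs ! Suc j)" if "j < Suc (length outs)" for j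
    using Cons.prems(3) that by simp
  have "R a e (cfs' ! 0)"
    using steps[of 0] cfs by simp
  moreover have "(\<lambda>x y. \<exists>e. R x e y)\<^sup>*\<^sup>* (cfs' ! 0) b"
  proof (rule Cons.IH)
    show "\<forall>j < length outs. R (cfs' ! j) (outs ! j) (cfs' ! Suc j)"
      using steps cfs by fastforce
    show "last cfs' = b"
      using Cons.prems(4) cfs \<open>cfs' \<noteq> []\<close> by simp
  qed (use Cons.prems(1) cfs in simp_all)
  ultimately show ?case
    by (blast intro: converse_rtranclp_into_rtranclp)
qed

lemma indexed_path_if_rtranclp:
  "(\<lambda>x y. \<exists>e. R x e y)\<^sup>*\<^sup>* a b \<Longrightarrow> \<exists>cfs outs. length cfs = Suc (length outs) \<and> cfs ! 0 = a \<and>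
      (\<forall>j < length outs. R (cfs ! j) (outs ! j) (cfs ! Suc j)) \<and> last cfs = b"
proof (induction rule: converse_rtranclp_induct)
  case base
  show ?case by (intro exI[of _ "[b]"] exI[of _ "[]"]) simp
next
  case (step a y)
  then obtain e cfs outs where e: "R a e y" and path: "length cfs = Suc (length outs)"
    "cfs ! 0 = y" "\<forall>j < length outs. R (cfs ! j) (outs ! j) (cfs ! Suc j)" "last cfs = b"
    by blast
  have "R ((a # cfs) ! j) ((e # outs) ! j) ((a # cfs) ! Suc j)" if "j < Suc (length outs)" for j
    using that e path(2,3) by (cases j) auto
  moreover have "last (a # cfs) = b"
    using path(1,4) by auto
  moreover have "length (a # cfs) = Suc (length (e # outs))" "(a # cfs) ! 0 = a"
    using path(1) by simp_all
  ultimately show ?case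
    by (metis length_Cons)
qed

lemma indexed_path_iff_rtranclp:
  "(\<exists>cfs outs. length cfs = Suc (length outs) \<and> cfs ! 0 = a \<and>
      (\<forall>j < length outs. R (cfs ! j) (outs ! j) (cfs ! Suc j)) \<and> last cfs = b)
   \<longleftrightarrow> (\<lambda>x y. \<exists>e. R x e y)\<^sup>*\<^sup>* a b"
proof
  assume "\<exists>cfs outs. length cfs = Suc (length outs) \<and> cfs ! 0 = a \<and>
      (\<forall>j < length outs. R (cfs ! j) (outs ! j) (cfs ! Suc j)) \<and> last cfs = b"
  then show "(\<lambda>x y. \<exists>e. R x e y)\<^sup>*\<^sup>* a b"
    by (elim exE conjE) (rule rtranclp_if_indexed_path)
qed (rule indexed_path_if_rtranclp)

definition nmt_accepts :: "('a, 'g) nmt \<Rightarrow> nat \<Rightarrow> 'a letter list \<Rightarrow> nat \<Rightarrow> bool" where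
  "nmt_accepts T q w p \<longleftrightarrow> (\<exists>x. nmt_op T q w (x, p))"

lemma nmt_accepts_final: "nmt_accepts T q w p \<Longrightarrow> p \<in> nmt_final T"
  by (cases T) (auto simp: nmt_accepts_def Let_def)

lemma nmt_accepts_Simple:
  "nmt_accepts (Simple Q q0 F \<delta> \<mu>) q w p \<longleftrightarrow>
     p \<in> F \<and> p = \<delta> (fold (\<lambda>a s. \<delta> s (Let a)) w (\<delta> q LEnd)) REnd"
  by (auto simp: nmt_accepts_def Let_def fold_map comp_def)

lemma recognizable_Simple:
  assumes "nmt_wf (Simple Q q0 F \<delta> \<mu>)"
  shows "recognizable A Q (nmt_accepts (Simple Q q0 F \<delta> \<mu>))"
proof (rule recognizable_by_fold[where f = "\<lambda>s a. \<delta> s (Let a)"])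
  show "finite Q" "\<And>s a. s \<in> Q \<Longrightarrow> \<delta> s (Let a) \<in> Q"
    using assms by auto
  fix w w' q p
  assume "\<forall>s\<in>Q. fold (\<lambda>a s. \<delta> s (Let a)) w s = fold (\<lambda>a s. \<delta> s (Let a)) w' s" "q \<in> Q"
  moreover have "\<delta> q LEnd \<in> Q"
    using assms \<open>q \<in> Q\<close> by auto
  ultimately show "nmt_accepts (Simple Q q0 F \<delta> \<mu>) q w p = nmt_accepts (Simple Q q0 F \<delta> \<mu>) q w' p"
    unfolding nmt_accepts_Simple by simp
qed

definition ann :: "'a letter \<Rightarrow> nat \<Rightarrow> 'a letter" where
  "ann l c = (fst l, c # snd l)"

definition annset :: "'a letter set \<Rightarrow> nat set \<Rightarrow> 'a letter set" where
  "annset A C = (\<lambda>(l, c). ann l c) ` (A \<times> C)"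

lemma annotate_Nil [simp]: "annotate [] v = []"
  by (simp add: annotate_def)

lemma annotate_Cons: "annotate (l # w) (c # v) = ann l c # annotate w v"
  by (cases l) (simp add: annotate_def ann_def)

lemma annotate_in_lists: "w \<in> lists A \<Longrightarrow> set v \<subseteq> C \<Longrightarrow> annotate w v \<in> lists (annset A C)"
proof (induction w arbitrary: v)
  case (Cons l w)
  show ?case
  proof (cases v)
    case Nil
    then show ?thesis by (simp add: annotate_def)
  next
    case (Cons c v')
    have "ann l c \<in> annset A C"
      using Cons.prems \<open>v = c # v'\<close> unfolding annset_def by force
    then show ?thesis
      using Cons.IH[of v'] Cons.prems \<open>v = c # v'\<close> by (simp add: annotate_Cons)
  qed
qed simp

text \<open>Outcome of a run confined to positions 0..m: acceptance in a final state, or a move to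
  position m + 1 in the given state.\<close>

datatype outcome = Exit nat | Accept nat

locale nest_congruence =
  fixes C :: "nat set" and c0 :: nat and Q :: "nat set" and q0 :: nat and F :: "nat set"
    and \<delta> :: "nat \<Rightarrow> 'a letter option \<Rightarrow> nat \<Rightarrow> (nat option \<times> nat) option"
    and dc :: "nat \<Rightarrow> nat \<Rightarrow> nat" and dr :: "nat \<Rightarrow> nat \<Rightarrow> nat \<Rightarrow> nat"
    and \<mu> :: "nat \<Rightarrow> 'a letter option \<Rightarrow> nat \<Rightarrow> 'g list"
    and T' :: "('a, 'g) nmt" and A :: "'a letter set" and \<Phi>' :: "'a letter list \<Rightarrow> nat"
  assumes wf: "nmt_wf (Nest C c0 Q q0 F \<delta> dc dr \<mu> T')"
    and assistant: "congruence_recognizes (annset A C) \<Phi>' (nmt_states T') (nmt_accepts T')"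
begin

lemma
  shows c0_in_C: "c0 \<in> C" and finite_C: "finite C" and finite_Q: "finite Q"
    and drop_closed: "\<lbrakk>q \<in> Q; c \<in> C; \<delta> q l c = Some (Some c', q')\<rbrakk> \<Longrightarrow> c' \<in> C \<and> q' \<in> Q"
    and lift_closed: "\<lbrakk>q \<in> Q; c \<in> C; \<delta> q l c = Some (None, q')\<rbrakk> \<Longrightarrow> q' \<in> Q"
    and call_closed: "\<lbrakk>q \<in> Q; c \<in> C\<rbrakk> \<Longrightarrow> dc q c \<in> nmt_states T'"
    and return_closed: "\<lbrakk>q \<in> Q; c \<in> C; p \<in> nmt_final T'\<rbrakk> \<Longrightarrow> dr q c p \<in> Q"
  using wf unfolding nmt_wf.simps by blast+

definition move :: "'a letter list \<Rightarrow> config \<Rightarrow> config \<Rightarrow> bool" where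
  "move w a b \<longleftrightarrow> fst a \<notin> F \<and> (\<exists>x. nmt_step (nmt_op T') \<delta> dc dr \<mu> w a x b)"

definition move_within :: "'a letter list \<Rightarrow> nat \<Rightarrow> config \<Rightarrow> config \<Rightarrow> bool" where
  "move_within w m a b \<longleftrightarrow> move w a b \<and> fst (snd b) \<le> m"

text \<open>For an exit, V is the list of marbles left on positions m + 1, m + 2, ...\<close>

definition outcome_within :: "'a letter list \<Rightarrow> nat \<Rightarrow> config \<Rightarrow> nat list \<Rightarrow> outcome \<Rightarrow> bool" where
  "outcome_within w m a V r \<longleftrightarrow> (\<exists>b. (move_within w m)\<^sup>*\<^sup>* a b \<and>
     (case r of Accept f \<Rightarrow> fst b = f \<and> f \<in> F | Exit q \<Rightarrow> move w b (q, Suc m, V)))"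

lemma move_shape:
  assumes "move w (s, i, v) (s', i', v')"
  shows "s \<notin> F \<and> v \<noteq> [] \<and>
    ((1 \<le> i \<and> i' = i - 1 \<and> (\<exists>c'. v' = c' # v)) \<or> (i' = Suc i \<and> v' = tl v))"
  using assms by (auto simp: move_def nmt_step_def)

lemma move_left_inv:
  assumes "move w (s, i, c # v) (s', i', v')" and "i' < i"
  shows "s \<notin> F \<and> i' = i - 1 \<and> (\<exists>c'. \<delta> s (pos_letter w i) c = Some (Some c', s') \<and> v' = c' # c # v)"
  using assms by (auto simp: move_def nmt_step_def)

lemma move_right_inv:
  assumes "move w (s, i, c # v) (s', Suc i, v')" and "1 \<le> i"
  shows "s \<notin> F \<and> \<delta> s (pos_letter w i) c = Some (None, s') \<and> v' = v"
  using assms by (auto simp: move_def nmt_step_def)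

lemma move_leftI:
  "\<lbrakk>s \<notin> F; i \<le> length w; \<delta> s (pos_letter w (Suc i)) c = Some (Some c', q')\<rbrakk>
   \<Longrightarrow> move w (s, Suc i, c # v) (q', i, c' # c # v)"
  by (auto simp: move_def nmt_step_def)

lemma move_rightI:
  "\<lbrakk>s \<notin> F; 1 \<le> i; i \<le> length w; \<delta> s (pos_letter w i) c = Some (None, q')\<rbrakk>
   \<Longrightarrow> move w (s, i, c # v) (q', Suc i, v)"
  by (auto simp: move_def nmt_step_def)

lemma move_call_iff:
  "move w (s, 0, c # v) (q, Suc 0, v) \<longleftrightarrow>
     s \<notin> F \<and> (\<exists>p. nmt_accepts T' (dc s c) (annotate w v) p \<and> q = dr s c p)"
  by (auto simp: move_def nmt_step_def nmt_accepts_def)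

lemma move_within_length: "move_within w (Suc (length w)) = move w"
proof -
  have "fst (snd b) \<le> Suc (length w)" if "move w a b" for a b
    using that by (cases a; cases b) (auto simp: move_def nmt_step_def)
  then show ?thesis
    by (auto simp: move_within_def fun_eq_iff)
qed

lemma move_within_mono: "(move_within w m)\<^sup>*\<^sup>* a b \<Longrightarrow> (move_within w (Suc m))\<^sup>*\<^sup>* a b"
  by (rule rtranclp_mono[THEN predicate2D, rotated]) (auto simp: move_within_def)

lemma move_within_stays:
  "(move_within w m)\<^sup>*\<^sup>* a b \<Longrightarrow> fst (snd a) \<le> m \<Longrightarrow> fst (snd b) \<le> m"
  by (induction rule: rtranclp_induct) (auto simp: move_within_def)

lemma move_within_0: "(move_within w 0)\<^sup>*\<^sup>* a b \<Longrightarrow> fst (snd a) = 0 \<Longrightarrow> b = a"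
proof (induction rule: converse_rtranclp_induct)
  case (step a a')
  obtain s i v s' i' v' where "a = (s, i, v)" "a' = (s', i', v')"
    by (cases a; cases a')
  with step show ?case
    using move_shape[of w s i v s' i' v'] by (auto simp: move_within_def)
qed simp

text \<open>drop (Suc m - i) v lists the marbles on positions m + 1, m + 2, ... of a configuration
  at position i \<le> Suc m.\<close>

lemma move_keeps_marbles_above:
  assumes "move w (s, i, v) (s', i', v')" and "i \<le> m" and "i' \<le> Suc m"
  shows "drop (Suc m - i') v' = drop (Suc m - i) v"
  using move_shape[OF assms(1)]
proof (elim conjE disjE exE)
  fix c' assume "1 \<le> i" "i' = i - 1" "v' = c' # v"
  then have "Suc m - i' = Suc (Suc m - i)"
    using assms(2) by simp
  then show ?thesis
    using \<open>v' = c' # v\<close> by (simp only: drop_Suc_Cons)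
next
  assume "i' = Suc i" "v' = tl v"
  then have "Suc m - i = Suc (Suc m - i')"
    using assms(2) by simp
  then show ?thesis
    using \<open>v' = tl v\<close> by (simp only: drop_Suc)
qed

lemma first_return:
  assumes "(move_within w (Suc m) ^^ n) (s, i, v) x" and "i \<le> m"
  shows "(move_within w m)\<^sup>*\<^sup>* (s, i, v) x \<or>
    (\<exists>y t k. (move_within w m)\<^sup>*\<^sup>* (s, i, v) y \<and> move w y (t, Suc m, drop (Suc m - i) v) \<and>
       k < n \<and> (move_within w (Suc m) ^^ k) (t, Suc m, drop (Suc m - i) v) x)"
  using assms
proof (induction n arbitrary: s i v)
  case 0
  then show ?case by simp
next
  case (Suc n)
  then obtain s' i' v' where first: "move_within w (Suc m) (s, i, v) (s', i', v')"
    and rest: "(move_within w (Suc m) ^^ n) (s', i', v') x"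
    by (metis prod_cases3 relpowp_Suc_E2)
  have move: "move w (s, i, v) (s', i', v')" and "i' \<le> Suc m"
    using first by (auto simp: move_within_def)
  have marbles: "drop (Suc m - i') v' = drop (Suc m - i) v"
    using move_keeps_marbles_above[OF move Suc.prems(2) \<open>i' \<le> Suc m\<close>] .
  show ?case
  proof (cases "i' \<le> m")
    case True
    then have "move_within w m (s, i, v) (s', i', v')"
      using move by (simp add: move_within_def)
    with Suc.IH[OF rest True] show ?thesis
      unfolding marbles by (blast intro: converse_rtranclp_into_rtranclp less_SucI)
  next
    case False
    then have "(s', i', v') = (s', Suc m, drop (Suc m - i) v)"
      using \<open>i' \<le> Suc m\<close> marbles by simp
    then show ?thesis
      using move rest by blast
  qed
qed

section \<open>Behaviour tables\<close>

text \<open>The entry (s, c, \<rho>) of the table at position m lists the outcomes of runs that start at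
  position m in state s with marble c there and stay on positions 0..m, where \<rho> is the
  \<Phi>'-class of the annotated input right of m.\<close>

definition class_rep :: "nat \<Rightarrow> 'a letter list" where
  "class_rep \<rho> = (SOME w. w \<in> lists (annset A C) \<and> \<Phi>' w = \<rho>)"

definition table_dom :: "(nat \<times> nat \<times> nat) set" where
  "table_dom = Q \<times> C \<times> \<Phi>' ` lists (annset A C)"

definition outcomes :: "outcome set" where
  "outcomes = Exit ` Q \<union> Accept ` Q"

definition tables :: "(nat \<times> nat \<times> nat \<Rightarrow> outcome set) set" where
  "tables = {B. \<forall>x. (x \<in> table_dom \<longrightarrow> B x \<in> Pow outcomes) \<and> (x \<notin> table_dom \<longrightarrow> B x = {})}"

definition table0 :: "nat \<times> nat \<times> nat \<Rightarrow> outcome set" where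
  "table0 = (\<lambda>(s, c, \<rho>). if (s, c, \<rho>) \<notin> table_dom then {}
     else if s \<in> F then {Accept s}
     else {Exit (dr s c p) | p. nmt_accepts T' (dc s c) (class_rep \<rho>) p})"

text \<open>At position m + 1 the machine repeatedly drops a marble and makes an excursion to the left,
  whose outcomes are read off the table B at m, until it accepts, lifts its marble, or an
  excursion accepts.\<close>

definition loop_step ::
  "(nat \<times> nat \<times> nat \<Rightarrow> outcome set) \<Rightarrow> 'a letter option \<Rightarrow> nat \<Rightarrow> nat \<Rightarrow> nat \<Rightarrow> nat \<Rightarrow> bool" where
  "loop_step B l c \<rho> s t \<longleftrightarrow>
     s \<notin> F \<and> (\<exists>c' q'. \<delta> s l c = Some (Some c', q') \<and> Exit t \<in> B (q', c', \<rho>))"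

definition loop_outcomes ::
  "(nat \<times> nat \<times> nat \<Rightarrow> outcome set) \<Rightarrow> 'a letter option \<Rightarrow> nat \<Rightarrow> nat \<Rightarrow> nat \<Rightarrow> outcome set" where
  "loop_outcomes B l c \<rho> s = {r. \<exists>t. (loop_step B l c \<rho>)\<^sup>*\<^sup>* s t \<and>
     (t \<in> F \<and> r = Accept t \<or>
      t \<notin> F \<and> ((\<exists>q'. \<delta> t l c = Some (None, q') \<and> r = Exit q') \<or>
                 (\<exists>c' q' f. \<delta> t l c = Some (Some c', q') \<and> Accept f \<in> B (q', c', \<rho>) \<and> r = Accept f)))}"

definition table_step :: "(nat \<times> nat \<times> nat \<Rightarrow> outcome set) \<Rightarrow> 'a letter \<Rightarrow> nat \<times> nat \<times> nat \<Rightarrow> outcome set" where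
  "table_step B l = (\<lambda>(s, c, \<rho>). if (s, c, \<rho>) \<in> table_dom
     then loop_outcomes B (Some l) c (\<Phi>' (ann l c # class_rep \<rho>)) s else {})"

definition table_at :: "'a letter list \<Rightarrow> nat \<Rightarrow> nat \<times> nat \<times> nat \<Rightarrow> outcome set" where
  "table_at w m = fold (\<lambda>l B. table_step B l) (take m w) table0"

lemma class_rep_represents:
  "w \<in> lists (annset A C) \<Longrightarrow> class_rep (\<Phi>' w) \<in> lists (annset A C) \<and> \<Phi>' (class_rep (\<Phi>' w)) = \<Phi>' w"
  unfolding class_rep_def by (rule someI[of _ w]) simp

lemma finite_tables: "finite tables"
proof -
  have "finite table_dom" "finite (Pow outcomes)"
    using finite_Q finite_C congruence_recognizes_finite[OF assistant]
    by (simp_all add: table_dom_def outcomes_def)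
  then show ?thesis
    unfolding tables_def by (rule finite_set_of_finite_funs)
qed

lemma in_outcomes_iff [simp]:
  "Exit t \<in> outcomes \<longleftrightarrow> t \<in> Q" "Accept t \<in> outcomes \<longleftrightarrow> t \<in> Q"
  by (auto simp: outcomes_def)

lemma tables_outcomes:
  assumes "B \<in> tables" and "r \<in> B x"
  shows "r \<in> outcomes"
proof -
  have "x \<in> table_dom"
    using assms unfolding tables_def by blast
  then show ?thesis
    using assms unfolding tables_def by blast
qed

lemma tablesI:
  "(\<And>x. x \<in> table_dom \<Longrightarrow> B x \<subseteq> outcomes) \<Longrightarrow> (\<And>x. x \<notin> table_dom \<Longrightarrow> B x = {}) \<Longrightarrow> B \<in> tables"
  unfolding tables_def by blast

lemma table0_in_tables: "table0 \<in> tables"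
proof (rule tablesI)
  fix x
  assume "x \<in> table_dom"
  then obtain s c \<rho> where x: "x = (s, c, \<rho>)" and "s \<in> Q" "c \<in> C"
    by (auto simp: table_dom_def)
  then have "dr s c p \<in> Q" if "nmt_accepts T' (dc s c) (class_rep \<rho>) p" for p
    using return_closed nmt_accepts_final[OF that] by blast
  then show "table0 x \<subseteq> outcomes"
    using x \<open>s \<in> Q\<close> by (auto simp: table0_def)
qed (auto simp: table0_def)

lemma loop_step_closed:
  "(loop_step B l c \<rho>)\<^sup>*\<^sup>* s t \<Longrightarrow> B \<in> tables \<Longrightarrow> s \<in> Q \<Longrightarrow> t \<in> Q"
  by (induction rule: rtranclp_induct) (auto simp: loop_step_def dest: tables_outcomes)

lemma loop_outcomes_prepend:
  "loop_step B l c \<rho> s t \<Longrightarrow> loop_outcomes B l c \<rho> t \<subseteq> loop_outcomes B l c \<rho> s"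
  unfolding loop_outcomes_def by (auto intro: converse_rtranclp_into_rtranclp)

lemma loop_outcomes_in_outcomes:
  assumes "B \<in> tables" and "s \<in> Q" and "c \<in> C"
  shows "loop_outcomes B l c \<rho> s \<subseteq> outcomes"
proof
  fix r
  assume "r \<in> loop_outcomes B l c \<rho> s"
  then obtain t where path: "(loop_step B l c \<rho>)\<^sup>*\<^sup>* s t" and
    "t \<in> F \<and> r = Accept t \<or>
     t \<notin> F \<and> ((\<exists>q'. \<delta> t l c = Some (None, q') \<and> r = Exit q') \<or>
       (\<exists>c' q' f. \<delta> t l c = Some (Some c', q') \<and> Accept f \<in> B (q', c', \<rho>) \<and> r = Accept f))"
    unfolding loop_outcomes_def by blast
  moreover have "t \<in> Q"
    using loop_step_closed[OF path assms(1,2)] .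
  ultimately show "r \<in> outcomes"
    using lift_closed assms(3) by (auto dest!: tables_outcomes[OF assms(1)])
qed

lemma table_step_in_tables:
  assumes "B \<in> tables"
  shows "table_step B l \<in> tables"
proof (rule tablesI)
  fix x
  assume "x \<in> table_dom"
  moreover obtain s c \<rho> where "x = (s, c, \<rho>)"
    by (cases x)
  ultimately show "table_step B l x \<subseteq> outcomes"
    using loop_outcomes_in_outcomes[OF assms] by (simp add: table_step_def table_dom_def)
next
  fix x
  assume "x \<notin> table_dom"
  then show "table_step B l x = {}"
    by (cases x) (simp add: table_step_def)
qed

lemma table_at_in_tables: "table_at w m \<in> tables"
proof -
  have "fold (\<lambda>l B. table_step B l) u B \<in> tables" if "B \<in> tables" for u B
    using that by (induction u arbitrary: B) (simp_all add: table_step_in_tables)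
  then show ?thesis
    unfolding table_at_def using table0_in_tables by blast
qed

definition table_correct :: "'a letter list \<Rightarrow> nat \<Rightarrow> bool" where
  "table_correct w m \<longleftrightarrow> (\<forall>s\<in>Q. \<forall>c\<in>C. \<forall>V r. set V \<subseteq> C \<longrightarrow>
     (r \<in> table_at w m (s, c, \<Phi>' (annotate (drop m w) V)) \<longleftrightarrow> outcome_within w m (s, m, c # V) V r))"

lemma table0_correct:
  assumes "w \<in> lists A"
  shows "table_correct w 0"
  unfolding table_correct_def
proof (intro ballI allI impI)
  fix s c V r
  assume "s \<in> Q" "c \<in> C" "set V \<subseteq> C"
  let ?u = "annotate w V"
  have u: "?u \<in> lists (annset A C)"
    using annotate_in_lists assms \<open>set V \<subseteq> C\<close> by blast
  then have dom: "(s, c, \<Phi>' ?u) \<in> table_dom"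
    using \<open>s \<in> Q\<close> \<open>c \<in> C\<close> by (simp add: table_dom_def)
  have rep: "nmt_accepts T' (dc s c) (class_rep (\<Phi>' ?u)) p \<longleftrightarrow> nmt_accepts T' (dc s c) ?u p" for p
    using congruence_recognizes_saturates[OF assistant] class_rep_represents[OF u] u
      call_closed[OF \<open>s \<in> Q\<close> \<open>c \<in> C\<close>] by blast
  have "outcome_within w 0 (s, 0, c # V) V r \<longleftrightarrow>
      (case r of Accept f \<Rightarrow> s = f \<and> f \<in> F | Exit q \<Rightarrow> move w (s, 0, c # V) (q, Suc 0, V))"
    unfolding outcome_within_def using move_within_0[of w "(s, 0, c # V)"] by (cases r) auto
  then show "r \<in> table_at w 0 (s, c, \<Phi>' (annotate (drop 0 w) V)) \<longleftrightarrow> outcome_within w 0 (s, 0, c # V) V r"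
    using dom rep by (cases r) (auto simp: table_at_def table0_def move_call_iff)
qed

lemma table_at_Suc:
  assumes "w \<in> lists A" and "m < length w" and "s \<in> Q" and "c \<in> C" and "set V \<subseteq> C"
  shows "table_at w (Suc m) (s, c, \<Phi>' (annotate (drop (Suc m) w) V)) =
    loop_outcomes (table_at w m) (pos_letter w (Suc m)) c (\<Phi>' (annotate (drop m w) (c # V))) s"
proof -
  let ?u = "annotate (drop (Suc m) w) V" and ?a = "ann (w ! m) c"
  have "drop (Suc m) w \<in> lists A"
    using assms(1) by (simp add: in_lists_conv_set) (meson in_set_dropD)
  then have u: "?u \<in> lists (annset A C)"
    using annotate_in_lists assms(5) by blast
  then have dom: "(s, c, \<Phi>' ?u) \<in> table_dom"
    using assms(3,4) by (simp add: table_dom_def)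
  have "w ! m \<in> A"
    using assms(1,2) by (simp add: in_lists_conv_set)
  then have a: "?a \<in> annset A C"
    using assms(4) unfolding annset_def by force
  have "annotate (drop m w) (c # V) = ?a # ?u"
    by (simp add: Cons_nth_drop_Suc[OF assms(2), symmetric] annotate_Cons)
  moreover have "\<Phi>' ([?a] @ class_rep (\<Phi>' ?u)) = \<Phi>' ([?a] @ ?u)"
    using a u class_rep_represents[OF u] by (intro congruence_recognizes_append[OF assistant]) simp_all
  moreover have "table_at w (Suc m) = table_step (table_at w m) (w ! m)"
    by (simp add: table_at_def take_Suc_conv_app_nth[OF assms(2)])
  moreover have "pos_letter w (Suc m) = Some (w ! m)"
    using assms(2) by (simp add: pos_letter_def)
  ultimately show ?thesis
    using dom by (simp add: table_step_def)
qed

lemma table_correctD: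
  assumes "table_correct w m" and "s \<in> Q" and "c \<in> C" and "set V \<subseteq> C"
  shows "r \<in> table_at w m (s, c, \<Phi>' (annotate (drop m w) V)) \<longleftrightarrow> outcome_within w m (s, m, c # V) V r"
  using assms unfolding table_correct_def by blast

lemma excursion_of_table_entry:
  assumes "table_correct w m" and "m \<le> length w" and "t \<in> Q" and "c \<in> C" and "set V \<subseteq> C"
    and "t \<notin> F" and \<delta>: "\<delta> t (pos_letter w (Suc m)) c = Some (Some c', q')"
    and "r \<in> table_at w m (q', c', \<Phi>' (annotate (drop m w) (c # V)))"
  obtains b where "(move_within w (Suc m))\<^sup>*\<^sup>* (t, Suc m, c # V) b"
    and "case r of Accept f \<Rightarrow> fst b = f \<and> f \<in> F | Exit q \<Rightarrow> move w b (q, Suc m, c # V)"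
proof -
  have "c' \<in> C" "q' \<in> Q"
    using drop_closed assms(3,4) \<delta> by blast+
  then have "outcome_within w m (q', m, c' # c # V) (c # V) r"
    using table_correctD[OF assms(1)] assms(4,5,8) by simp
  then obtain b where path: "(move_within w m)\<^sup>*\<^sup>* (q', m, c' # c # V) b"
    and "case r of Accept f \<Rightarrow> fst b = f \<and> f \<in> F | Exit q \<Rightarrow> move w b (q, Suc m, c # V)"
    unfolding outcome_within_def by blast
  moreover have "move_within w (Suc m) (t, Suc m, c # V) (q', m, c' # c # V)"
    using move_leftI[OF \<open>t \<notin> F\<close> assms(2) \<delta>] by (simp add: move_within_def)
  then have "(move_within w (Suc m))\<^sup>*\<^sup>* (t, Suc m, c # V) b"
    using move_within_mono[OF path] by (rule converse_rtranclp_into_rtranclp)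
  ultimately show ?thesis
    using that by blast
qed

lemma table_entry_of_excursion:
  assumes "table_correct w m" and "q' \<in> Q" and "c' \<in> C" and "c \<in> C" and "set V \<subseteq> C"
    and "(move_within w m)\<^sup>*\<^sup>* (q', m, c' # c # V) b"
    and "case r of Accept f \<Rightarrow> fst b = f \<and> f \<in> F | Exit q \<Rightarrow> move w b (q, Suc m, c # V)"
  shows "r \<in> table_at w m (q', c', \<Phi>' (annotate (drop m w) (c # V)))"
proof -
  have "outcome_within w m (q', m, c' # c # V) (c # V) r"
    unfolding outcome_within_def using assms(6,7) by blast
  then show ?thesis
    using table_correctD[OF assms(1,2,3)] assms(4,5) by simp
qed

lemma loop_step_run:
  assumes "table_correct w m" and "m \<le> length w" and "s \<in> Q" and "c \<in> C" and "set V \<subseteq> C"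
    and "(loop_step (table_at w m) (pos_letter w (Suc m)) c (\<Phi>' (annotate (drop m w) (c # V))))\<^sup>*\<^sup>* s t"
  shows "t \<in> Q \<and> (move_within w (Suc m))\<^sup>*\<^sup>* (s, Suc m, c # V) (t, Suc m, c # V)"
  using assms(6)
proof (induction rule: rtranclp_induct)
  case (step t t')
  then obtain c' q' where "t \<notin> F" "\<delta> t (pos_letter w (Suc m)) c = Some (Some c', q')"
    and t': "Exit t' \<in> table_at w m (q', c', \<Phi>' (annotate (drop m w) (c # V)))"
    by (auto simp: loop_step_def)
  then obtain b where "(move_within w (Suc m))\<^sup>*\<^sup>* (t, Suc m, c # V) b"
    and "case Exit t' of Accept f \<Rightarrow> fst b = f \<and> f \<in> F | Exit q \<Rightarrow> move w b (q, Suc m, c # V)"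
    using excursion_of_table_entry[OF assms(1,2) conjunct1[OF step.IH] assms(4,5)] by blast
  then have "(move_within w (Suc m))\<^sup>*\<^sup>* (t, Suc m, c # V) (t', Suc m, c # V)"
    by (simp add: move_within_def rtranclp.rtrancl_into_rtrancl)
  moreover have "t' \<in> Q"
    using tables_outcomes[OF table_at_in_tables t'] by simp
  ultimately show ?case
    using step.IH by (auto intro: rtranclp_trans)
qed (simp add: \<open>s \<in> Q\<close>)

lemma loop_outcomes_sound:
  assumes inv: "table_correct w m" and "m \<le> length w" and "s \<in> Q" and "c \<in> C" and "set V \<subseteq> C"
    and r: "r \<in> loop_outcomes (table_at w m) (pos_letter w (Suc m)) c (\<Phi>' (annotate (drop m w) (c # V))) s"
    and exit_inside: "\<And>q. r = Exit q \<Longrightarrow> Suc m \<le> length w"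
  shows "outcome_within w (Suc m) (s, Suc m, c # V) V r"
proof -
  let ?l = "pos_letter w (Suc m)"
  from r obtain t where path: "(loop_step (table_at w m) ?l c (\<Phi>' (annotate (drop m w) (c # V))))\<^sup>*\<^sup>* s t"
    and "t \<in> F \<and> r = Accept t \<or>
      t \<notin> F \<and> ((\<exists>q'. \<delta> t ?l c = Some (None, q') \<and> r = Exit q') \<or>
        (\<exists>c' q' f. \<delta> t ?l c = Some (Some c', q') \<and>
           Accept f \<in> table_at w m (q', c', \<Phi>' (annotate (drop m w) (c # V))) \<and> r = Accept f))"
    unfolding loop_outcomes_def by blast
  moreover note run = loop_step_run[OF assms(1-5) path]
  ultimately show ?thesis
  proof (elim disjE conjE exE)
    fix q'
    assume "t \<notin> F" "\<delta> t ?l c = Some (None, q')" "r = Exit q'"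
    then have "move w (t, Suc m, c # V) (q', Suc (Suc m), V)"
      using move_rightI exit_inside by simp
    with run \<open>r = Exit q'\<close> show ?thesis
      unfolding outcome_within_def by auto
  next
    fix c' q' f
    assume "t \<notin> F" and \<delta>: "\<delta> t ?l c = Some (Some c', q')"
      and f: "Accept f \<in> table_at w m (q', c', \<Phi>' (annotate (drop m w) (c # V)))" and "r = Accept f"
    obtain b where b: "(move_within w (Suc m))\<^sup>*\<^sup>* (t, Suc m, c # V) b"
      and "case Accept f of Accept f \<Rightarrow> fst b = f \<and> f \<in> F | Exit q \<Rightarrow> move w b (q, Suc m, c # V)"
      by (rule excursion_of_table_entry[OF assms(1,2) conjunct1[OF run] assms(4,5) \<open>t \<notin> F\<close> \<delta> f])
    then have "fst b = f" "f \<in> F"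
      by simp_all
    moreover have "(move_within w (Suc m))\<^sup>*\<^sup>* (s, Suc m, c # V) b"
      using conjunct2[OF run] b by (rule rtranclp_trans)
    ultimately show ?thesis
      unfolding outcome_within_def \<open>r = Accept f\<close> by (intro exI[of _ b]) simp
  qed (auto simp: outcome_within_def)
qed

lemma staying_run_accepts:
  assumes "(move_within w m)\<^sup>*\<^sup>* a b" and "fst (snd a) \<le> m"
    and "case r of Accept f \<Rightarrow> fst b = f \<and> f \<in> F | Exit q \<Rightarrow> move w b (q, Suc (Suc m), V)"
  obtains f where "r = Accept f" and "fst b = f" and "f \<in> F"
proof (cases r)
  case (Exit q)
  obtain s i v where b: "b = (s, i, v)"
    by (cases b)
  have "i \<le> m"
    using move_within_stays[OF assms(1,2)] b by simp
  then show ?thesis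
    using move_shape[of w s i v q "Suc (Suc m)" V] assms(3) Exit b by auto
qed (use assms(3) in simp)

lemma move_within_from_top:
  assumes "move_within w (Suc m) (t, Suc m, c # V) a"
  obtains c' q' where "t \<notin> F" and "\<delta> t (pos_letter w (Suc m)) c = Some (Some c', q')"
    and "a = (q', m, c' # c # V)"
proof -
  obtain q' i' v' where a: "a = (q', i', v')"
    by (cases a)
  with assms have "i' < Suc m"
    using move_shape[of w t "Suc m" "c # V" q' i' v'] by (auto simp: move_within_def)
  then show ?thesis
    using move_left_inv[of w t "Suc m" c V q' i' v'] assms a that by (auto simp: move_within_def)
qed

text \<open>By induction on the length of the run: its first move drops a marble at m, and the part
  of the run up to the first return to m + 1 is an excursion described by the table at m.\<close>

lemma loop_outcomes_complete_run:
  assumes inv: "table_correct w m" and "c \<in> C" and "set V \<subseteq> C"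
    and goal: "case r of Accept f \<Rightarrow> fst b = f \<and> f \<in> F | Exit q \<Rightarrow> move w b (q, Suc (Suc m), V)"
    and "t \<in> Q" and "(move_within w (Suc m) ^^ n) (t, Suc m, c # V) b"
  shows "r \<in> loop_outcomes (table_at w m) (pos_letter w (Suc m)) c (\<Phi>' (annotate (drop m w) (c # V))) t"
  using assms(5,6)
proof (induction n arbitrary: t rule: less_induct)
  case (less n)
  let ?B = "table_at w m" and ?l = "pos_letter w (Suc m)" and ?\<rho> = "\<Phi>' (annotate (drop m w) (c # V))"
  show ?case
  proof (cases n)
    case 0
    with less.prems have "b = (t, Suc m, c # V)"
      by simp
    with goal show ?thesis
      by (cases r) (auto simp: loop_outcomes_def dest: move_right_inv)
  next
    case (Suc k)
    then obtain a where first: "move_within w (Suc m) (t, Suc m, c # V) a"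
      and rest: "(move_within w (Suc m) ^^ k) a b"
      using less.prems(2) by (blast elim: relpowp_Suc_E2)
    from first obtain c' q' where "t \<notin> F" and \<delta>: "\<delta> t ?l c = Some (Some c', q')"
      and a: "a = (q', m, c' # c # V)"
      by (rule move_within_from_top)
    have "c' \<in> C" "q' \<in> Q"
      using drop_closed[OF less.prems(1) \<open>c \<in> C\<close> \<delta>] by auto
    note entry = table_entry_of_excursion[OF inv \<open>q' \<in> Q\<close> \<open>c' \<in> C\<close> \<open>c \<in> C\<close> \<open>set V \<subseteq> C\<close>]
    from first_return[OF rest[unfolded a] order_refl]
    consider (stays) "(move_within w m)\<^sup>*\<^sup>* (q', m, c' # c # V) b"
      | (returns) y t' k' where "(move_within w m)\<^sup>*\<^sup>* (q', m, c' # c # V) y"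
        "move w y (t', Suc m, c # V)" "k' < k" "(move_within w (Suc m) ^^ k') (t', Suc m, c # V) b"
      by auto
    then show ?thesis
    proof cases
      case stays
      obtain f where f: "r = Accept f" "fst b = f" "f \<in> F"
        by (rule staying_run_accepts[OF stays _ goal]) simp
      have "Accept f \<in> ?B (q', c', ?\<rho>)"
        using entry[OF stays] f(2,3) by simp
      then show ?thesis
        using \<open>t \<notin> F\<close> \<delta> f(1) rtranclp.rtrancl_refl unfolding loop_outcomes_def by blast
    next
      case returns
      have "Exit t' \<in> ?B (q', c', ?\<rho>)"
        using entry[OF returns(1)] returns(2) by simp
      then have "t' \<in> Q" and "loop_step ?B ?l c ?\<rho> t t'"
        using tables_outcomes[OF table_at_in_tables, of "Exit t'"] \<open>t \<notin> F\<close> \<delta>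
        by (auto simp: loop_step_def)
      moreover have "r \<in> loop_outcomes ?B ?l c ?\<rho> t'"
        using less.IH[of k' t'] returns(3,4) \<open>n = Suc k\<close> \<open>t' \<in> Q\<close> by simp
      ultimately show ?thesis
        using loop_outcomes_prepend by blast
    qed
  qed
qed

lemma loop_outcomes_complete:
  assumes "table_correct w m" and "s \<in> Q" and "c \<in> C" and "set V \<subseteq> C"
    and "outcome_within w (Suc m) (s, Suc m, c # V) V r"
  shows "r \<in> loop_outcomes (table_at w m) (pos_letter w (Suc m)) c (\<Phi>' (annotate (drop m w) (c # V))) s"
proof -
  obtain b n where "(move_within w (Suc m) ^^ n) (s, Suc m, c # V) b"
    and "case r of Accept f \<Rightarrow> fst b = f \<and> f \<in> F | Exit q \<Rightarrow> move w b (q, Suc (Suc m), V)"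
    using assms(5) unfolding outcome_within_def rtranclp_power by blast
  then show ?thesis
    using loop_outcomes_complete_run assms(1-4) by blast
qed

lemma table_at_correct:
  assumes "w \<in> lists A"
  shows "m \<le> length w \<Longrightarrow> table_correct w m"
proof (induction m)
  case 0
  show ?case
    using table0_correct[OF assms] .
next
  case (Suc m)
  then have "m < length w" and inv: "table_correct w m"
    by simp_all
  show ?case
    unfolding table_correct_def
  proof (intro ballI allI impI)
    fix s c V r
    assume "s \<in> Q" "c \<in> C" "set V \<subseteq> C"
    then show "r \<in> table_at w (Suc m) (s, c, \<Phi>' (annotate (drop (Suc m) w) V)) \<longleftrightarrow>
        outcome_within w (Suc m) (s, Suc m, c # V) V r"
      unfolding table_at_Suc[OF assms \<open>m < length w\<close> \<open>s \<in> Q\<close> \<open>c \<in> C\<close> \<open>set V \<subseteq> C\<close>]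
      using loop_outcomes_sound[OF inv _ \<open>s \<in> Q\<close> \<open>c \<in> C\<close> \<open>set V \<subseteq> C\<close>]
        loop_outcomes_complete[OF inv \<open>s \<in> Q\<close> \<open>c \<in> C\<close> \<open>set V \<subseteq> C\<close>] \<open>m < length w\<close>
      by auto
  qed
qed

lemma nmt_accepts_Nest_iff_outcome:
  "nmt_accepts (Nest C c0 Q q0 F \<delta> dc dr \<mu> T') q w p \<longleftrightarrow>
     outcome_within w (Suc (length w)) (q, Suc (length w), [c0]) [] (Accept p)"
proof -
  let ?R = "\<lambda>a e b. fst a \<notin> F \<and> nmt_step (nmt_op T') \<delta> dc dr \<mu> w a e b"
  have move_eq: "(\<lambda>a b. \<exists>e. ?R a e b) = move_within w (Suc (length w))"
    by (auto simp: move_within_length move_def fun_eq_iff)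
  let ?init = "(q, Suc (length w), [c0])"
  have "nmt_accepts (Nest C c0 Q q0 F \<delta> dc dr \<mu> T') q w p \<longleftrightarrow>
    (\<exists>b. (\<exists>cfs outs. length cfs = Suc (length outs) \<and> cfs ! 0 = ?init \<and>
       (\<forall>j < length outs. ?R (cfs ! j) (outs ! j) (cfs ! Suc j)) \<and> last cfs = b) \<and> fst b = p \<and> p \<in> F)"
    (is "_ \<longleftrightarrow> ?path")
  proof
    assume "nmt_accepts (Nest C c0 Q q0 F \<delta> dc dr \<mu> T') q w p"
    then obtain cfs outs where "length cfs = Suc (length outs)" "cfs ! 0 = ?init"
      "\<forall>j < length outs. nmt_step (nmt_op T') \<delta> dc dr \<mu> w (cfs ! j) (outs ! j) (cfs ! Suc j)"
      "\<forall>j < length outs. fst (cfs ! j) \<notin> F" "fst (last cfs) = p" "p \<in> F"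
      unfolding nmt_accepts_def nmt_op.simps by auto
    then show ?path
      by blast
  next
    assume ?path
    then obtain cfs outs where "length cfs = Suc (length outs)" "cfs ! 0 = ?init"
      "\<forall>j < length outs. ?R (cfs ! j) (outs ! j) (cfs ! Suc j)" "fst (last cfs) = p" "p \<in> F"
      by blast
    then show "nmt_accepts (Nest C c0 Q q0 F \<delta> dc dr \<mu> T') q w p"
      unfolding nmt_accepts_def nmt_op.simps
      by (intro exI[of _ "concat outs"] exI[of _ cfs] exI[of _ outs]) auto
  qed
  then show ?thesis
    unfolding indexed_path_iff_rtranclp[where R = ?R] move_eq outcome_within_def by simp
qed

lemma nmt_accepts_Nest_iff_table:
  assumes "w \<in> lists A" and "q \<in> Q"
  shows "nmt_accepts (Nest C c0 Q q0 F \<delta> dc dr \<mu> T') q w p \<longleftrightarrow>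
    Accept p \<in> loop_outcomes (fold (\<lambda>l B. table_step B l) w table0) None c0 (\<Phi>' []) q"
proof -
  have inv: "table_correct w (length w)"
    using table_at_correct[OF assms(1)] by simp
  have "nmt_accepts (Nest C c0 Q q0 F \<delta> dc dr \<mu> T') q w p \<longleftrightarrow>
      outcome_within w (Suc (length w)) (q, Suc (length w), [c0]) [] (Accept p)"
    by (rule nmt_accepts_Nest_iff_outcome)
  also have "\<dots> \<longleftrightarrow> Accept p \<in> loop_outcomes (table_at w (length w)) (pos_letter w (Suc (length w))) c0
      (\<Phi>' (annotate (drop (length w) w) [c0])) q"
    using loop_outcomes_sound[OF inv order_refl assms(2) c0_in_C, of "[]"]
      loop_outcomes_complete[OF inv assms(2) c0_in_C, of "[]"] by auto
  also have "\<dots> \<longleftrightarrow> Accept p \<in> loop_outcomes (fold (\<lambda>l B. table_step B l) w table0) None c0 (\<Phi>' []) q"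
    by (simp add: table_at_def pos_letter_def)
  finally show ?thesis .
qed

lemma recognizable_Nest: "recognizable A Q (nmt_accepts (Nest C c0 Q q0 F \<delta> dc dr \<mu> T'))"
proof (rule recognizable_by_fold[OF finite_tables table_step_in_tables])
  fix w w' q p
  assume "w \<in> lists A" "w' \<in> lists A" "q \<in> Q"
    and "\<forall>B\<in>tables. fold (\<lambda>l B. table_step B l) w B = fold (\<lambda>l B. table_step B l) w' B"
  then show "nmt_accepts (Nest C c0 Q q0 F \<delta> dc dr \<mu> T') q w p =
      nmt_accepts (Nest C c0 Q q0 F \<delta> dc dr \<mu> T') q w' p"
    using table0_in_tables by (simp add: nmt_accepts_Nest_iff_table)
qed

end

lemma recognizable_nmt_accepts: "nmt_wf T \<Longrightarrow> recognizable A (nmt_states T) (nmt_accepts T)"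
proof (induction T arbitrary: A)
  case (Simple Q q0 F \<delta> \<mu>)
  show ?case
    using recognizable_Simple[OF Simple.prems] by simp
next
  case (Nest C c0 Q q0 F \<delta> dc dr \<mu> T')
  have "nmt_wf T'"
    using Nest.prems unfolding nmt_wf.simps by blast
  then have "recognizable (annset A C) (nmt_states T') (nmt_accepts T')"
    by (rule Nest.IH)
  then obtain \<Phi>' where "congruence_recognizes (annset A C) \<Phi>' (nmt_states T') (nmt_accepts T')"
    unfolding recognizable_def by blast
  then interpret nest_congruence C c0 Q q0 F \<delta> dc dr \<mu> T' A \<Phi>'
    by (rule nest_congruence.intro[OF Nest.prems])
  show ?case
    using recognizable_Nest by simp
qed

theorem mainTheorem10:
  fixes T :: "('a :: finite, 'g) nmt"
  assumes "nmt_wf T"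
  shows "regular_lang (nmt_dom T)"
proof -
  have "recognizable (range (\<lambda>a. (a, []))) (nmt_states T) (nmt_accepts T)"
    using recognizable_nmt_accepts[OF assms] .
  moreover have "nmt_init T \<in> nmt_states T"
    using assms by (cases T) auto
  ultimately have "regular_lang {u. \<exists>p. nmt_accepts T (nmt_init T) (map (\<lambda>a. (a, [])) u) p}"
    by (rule regular_lang_if_recognizable)
  moreover have "nmt_dom T = {u. \<exists>p. nmt_accepts T (nmt_init T) (map (\<lambda>a. (a, [])) u) p}"
    unfolding nmt_dom_def nmt_accepts_def by auto
  ultimately show ?thesis
    by simp
qed

end
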